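(* Let $d\in\mathcal{S}G$ be such that $\pi\big(1+d\,\widehat{\sigma}(d)\big)$ is a unit of $\mathbb{F}G$. Then $\mathfrak{C}_{1,d}$ is a Hermitian LCD $2$-quasi-abelian code over $\mathcal{S}$ of rate $\frac12$, i.e. $\mathfrak{C}_{1,d}$ is a free $\mathcal{S}$-module of rank $n$ inside $(\mathcal{S}G)^2\cong\mathcal{S}^{2n}$.
   Context: Let $\mathcal{S}|\mathcal{R}$ be a Galois extension of degree $2$ of finite commutative chain rings, $\mathbf{m}$ the maximal ideal of $\mathcal{S}$, with residue fields $\mathcal{S}/\mathbf{m}=\mathbb{F}=\mathbb{F}_{q^2}$ and $\mathbb{F}_q$ for $\mathcal{R}$; let $\sigma$ generate $\mathrm{Aut}_{\mathcal{R}}(\mathcal{S})$ (order 2). Let $G$ be a finite abelian group of odd order $n$ with $\gcd(n,q)=1$. Define $\widehat{\sigma}:\mathcal{S}G\to\mathcal{S}G$, $\sum_ga_gg\mapsto\sum_g\sigma(a_g)g^{-1}$. The Hermitian form on $(\mathcal{S}G)^2$ is $\langle(a_1,b_1),(a_2,b_2)\rangle_H=\sum_g a_{1,g}\sigma(a_{2,g})+\sum_g b_{1,g}\sigma(b_{2,g})$. A $2$-quasi-abelian code over $\mathcal{S}$ is an $\mathcal{S}G$-submodule of $(\mathcal{S}G)^2$; it is Hermitian LCD if it meets its Hermitian dual only in $0$. $\mathfrak{C}_{c,d}=\{(uc,ud):u\in\mathcal{S}G\}$. The map $\pi:\mathcal{S}G\to\mathbb{F}G$ reduces coefficients modulo $\mathbf{m}$.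 *)

theory Defs
  imports Main "HOL-Computational_Algebra.Primes"
begin

definition subring_on :: "'a::comm_ring_1 set \<Rightarrow> bool" where
  "subring_on A \<longleftrightarrow> 0 \<in> A \<and> 1 \<in> A \<and>
     (\<forall>x\<in>A. \<forall>y\<in>A. x + y \<in> A \<and> x - y \<in> A \<and> x * y \<in> A)"

definition ideal_on :: "'a::comm_ring_1 set \<Rightarrow> 'a set \<Rightarrow> bool" where
  "ideal_on A I \<longleftrightarrow> I \<subseteq> A \<and> 0 \<in> I \<and>
     (\<forall>x\<in>I. \<forall>y\<in>I. x + y \<in> I) \<and> (\<forall>r\<in>A. \<forall>x\<in>I. r * x \<in> I)"

definition chain_ring_on :: "'a::comm_ring_1 set \<Rightarrow> bool" where
  "chain_ring_on A \<longleftrightarrow> subring_on A \<and> finite A \<and> (0::'a) \<noteq> 1 \<and>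
     (\<forall>I J. ideal_on A I \<and> ideal_on A J \<longrightarrow> I \<subseteq> J \<or> J \<subseteq> I)"

definition max_ideal_on :: "'a::comm_ring_1 set \<Rightarrow> 'a set" where
  "max_ideal_on A = (THE M. ideal_on A M \<and> M \<noteq> A \<and>
       (\<forall>J. ideal_on A J \<and> M \<subseteq> J \<longrightarrow> J = M \<or> J = A))"

definition residue_card :: "'a::comm_ring_1 set \<Rightarrow> nat" where
  "residue_card A = card ((\<lambda>x. {y \<in> A. x - y \<in> max_ideal_on A}) ` A)"

definition ring_aut :: "('a::comm_ring_1 \<Rightarrow> 'a) \<Rightarrow> bool" where
  "ring_aut \<tau> \<longleftrightarrow> bij \<tau> \<and> \<tau> 1 = 1 \<and> (\<forall>x y. \<tau> (x + y) = \<tau> x + \<tau> y \<and> \<tau> (x * y) = \<tau> x * \<tau> y)"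

definition Aut_over :: "'a::comm_ring_1 set \<Rightarrow> ('a \<Rightarrow> 'a) set" where
  "Aut_over R = {\<tau>. ring_aut \<tau> \<and> (\<forall>r\<in>R. \<tau> r = r)}"

text \<open>S (= UNIV) is a Galois extension of degree 2 of R with Galois group generated by sigma
  (Chase--Harrison--Rosenberg definition), and sigma generates Aut_R(S), of order 2.\<close>
definition galois_ext_deg2 :: "'a::comm_ring_1 set \<Rightarrow> ('a \<Rightarrow> 'a) \<Rightarrow> bool" where
  "galois_ext_deg2 R \<sigma> \<longleftrightarrow>
     subring_on R \<and> ring_aut \<sigma> \<and> \<sigma> \<noteq> id \<and> \<sigma> \<circ> \<sigma> = id \<and>
     Aut_over R = {id, \<sigma>} \<and> R = {x. \<sigma> x = x} \<and>
     (\<exists>(k::nat) (x::nat \<Rightarrow> 'a) (y::nat \<Rightarrow> 'a).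
        (\<Sum>i<k. x i * y i) = 1 \<and> (\<Sum>i<k. x i * \<sigma> (y i)) = 0)"

definition prime_power :: "nat \<Rightarrow> bool" where
  "prime_power q \<longleftrightarrow> (\<exists>p k. prime p \<and> k > 0 \<and> q = p ^ k)"

type_synonym ('a, 'g) grpring = "'g \<Rightarrow> 'a"

definition gr_mult :: "('a::comm_ring_1, 'g::{finite,ab_group_add}) grpring \<Rightarrow> ('a,'g) grpring \<Rightarrow> ('a,'g) grpring" where
  "gr_mult u v = (\<lambda>g. \<Sum>h\<in>UNIV. u h * v (g - h))"

definition gr_one :: "('a::comm_ring_1, 'g::{finite,ab_group_add}) grpring" where
  "gr_one = (\<lambda>g. if g = 0 then 1 else 0)"

definition gr_add :: "('a::comm_ring_1, 'g::{finite,ab_group_add}) grpring \<Rightarrow> ('a,'g) grpring \<Rightarrow> ('a,'g) grpring" where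
  "gr_add u v = (\<lambda>g. u g + v g)"

definition sigma_hat :: "('a \<Rightarrow> 'a) \<Rightarrow> ('a::comm_ring_1, 'g::{finite,ab_group_add}) grpring \<Rightarrow> ('a,'g) grpring" where
  "sigma_hat \<sigma> u = (\<lambda>g. \<sigma> (u (- g)))"

text \<open>pi(x) is a unit of FG, F = S/m: there is v in SG with pi(x)pi(v) = 1,
  i.e. all coefficients of x v - 1 lie in m.\<close>
definition pi_unit :: "'a set \<Rightarrow> ('a::comm_ring_1, 'g::{finite,ab_group_add}) grpring \<Rightarrow> bool" where
  "pi_unit m x \<longleftrightarrow> (\<exists>v. \<forall>g. gr_mult x v g - gr_one g \<in> m)"

type_synonym ('a, 'g) qa2 = "('a,'g) grpring \<times> ('a,'g) grpring"

definition herm :: "('a \<Rightarrow> 'a) \<Rightarrow> ('a::comm_ring_1, 'g::{finite,ab_group_add}) qa2 \<Rightarrow> ('a,'g) qa2 \<Rightarrow> 'a" where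
  "herm \<sigma> x y = (\<Sum>g\<in>UNIV. fst x g * \<sigma> (fst y g)) + (\<Sum>g\<in>UNIV. snd x g * \<sigma> (snd y g))"

definition herm_dual :: "('a \<Rightarrow> 'a) \<Rightarrow> ('a::comm_ring_1, 'g::{finite,ab_group_add}) qa2 set \<Rightarrow> ('a,'g) qa2 set" where
  "herm_dual \<sigma> C = {x. \<forall>c\<in>C. herm \<sigma> x c = 0}"

definition qa2_code :: "('a::comm_ring_1, 'g::{finite,ab_group_add}) qa2 set \<Rightarrow> bool" where
  "qa2_code C \<longleftrightarrow> ((\<lambda>_. 0), (\<lambda>_. 0)) \<in> C \<and>
     (\<forall>x\<in>C. \<forall>y\<in>C. (gr_add (fst x) (fst y), gr_add (snd x) (snd y)) \<in> C) \<and>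
     (\<forall>u. \<forall>x\<in>C. (gr_mult u (fst x), gr_mult u (snd x)) \<in> C)"

definition herm_LCD :: "('a \<Rightarrow> 'a) \<Rightarrow> ('a::comm_ring_1, 'g::{finite,ab_group_add}) qa2 set \<Rightarrow> bool" where
  "herm_LCD \<sigma> C \<longleftrightarrow> qa2_code C \<and> C \<inter> herm_dual \<sigma> C = {((\<lambda>_. 0), (\<lambda>_. 0))}"

definition free_S_rank :: "('a::comm_ring_1, 'g::{finite,ab_group_add}) qa2 set \<Rightarrow> nat \<Rightarrow> bool" where
  "free_S_rank C k \<longleftrightarrow> (\<exists>b :: nat \<Rightarrow> ('a,'g) qa2. (\<forall>i<k. b i \<in> C) \<and>
     (\<forall>c\<in>C. \<exists>!l :: nat \<Rightarrow> 'a. (\<forall>i\<ge>k. l i = 0) \<and> c = ((\<lambda>g. \<Sum>i<k. l i * fst (b i) g), (\<lambda>g. \<Sum>i<k. l i * snd (b i) g))))"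

definition code_C :: "('a::comm_ring_1, 'g::{finite,ab_group_add}) grpring \<Rightarrow> ('a,'g) grpring \<Rightarrow> ('a,'g) qa2 set" where
  "code_C c d = {(gr_mult u c, gr_mult u d) | u. True}"

end

theory Submission
  imports Defs
begin

(* Write x' for sigma_hat \<sigma> x.  The Hermitian product of (u, u d) and (w, w d) is the coefficient
   at 0 of u (1 + d d') w', and w' runs through all of SG; taking for w' the group elements shows
   that (u, u d) lies in the dual code exactly when u (1 + d d') = 0.  Elements of the maximal
   ideal of a finite chain ring are nilpotent, so if (1 + d d') v = 1 + e with all coefficients of
   e in that ideal, then e is nilpotent and 1 + d d' is a unit; hence u = 0.  The code is the graph
   of u \<mapsto> u d, so the group elements give an S-basis of it with |G| elements. *)

lemma gr_mult_commute: "gr_mult u v = gr_mult v u"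
proof
  fix g
  show "gr_mult u v g = gr_mult v u g"
    unfolding gr_mult_def
    by (rule sum.reindex_bij_witness[of _ "\<lambda>h. g - h" "\<lambda>h. g - h"]) (auto simp: mult.commute)
qed

lemma gr_mult_assoc: "gr_mult (gr_mult u v) w = gr_mult u (gr_mult v w)"
proof
  fix g
  have "gr_mult (gr_mult u v) w g = (\<Sum>k\<in>UNIV. \<Sum>h\<in>UNIV. u h * v (k - h) * w (g - k))"
    unfolding gr_mult_def by (simp add: sum_distrib_right)
  also have "\<dots> = (\<Sum>h\<in>UNIV. \<Sum>k\<in>UNIV. u h * v (k - h) * w (g - k))"
    by (rule sum.swap)
  also have "\<dots> = (\<Sum>h\<in>UNIV. \<Sum>k\<in>UNIV. u h * (v k * w (g - h - k)))"
  proof (rule sum.cong[OF refl])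
    fix h
    show "(\<Sum>k\<in>UNIV. u h * v (k - h) * w (g - k)) = (\<Sum>k\<in>UNIV. u h * (v k * w (g - h - k)))"
      by (rule sum.reindex_bij_witness[of _ "\<lambda>k. k + h" "\<lambda>k. k - h"]) (auto simp: algebra_simps)
  qed
  also have "\<dots> = gr_mult u (gr_mult v w) g"
    unfolding gr_mult_def by (simp add: sum_distrib_left)
  finally show "gr_mult (gr_mult u v) w g = gr_mult u (gr_mult v w) g" .
qed

lemma gr_mult_one_right: "gr_mult u gr_one = u"
  unfolding gr_mult_def gr_one_def by (simp add: if_distrib cong: if_cong)

lemma gr_mult_add_left: "gr_mult (gr_add u v) w = gr_add (gr_mult u w) (gr_mult v w)"
  unfolding gr_mult_def gr_add_def by (simp add: distrib_right sum.distrib)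

typedef ('a, 'g) group_ring = "UNIV :: ('g \<Rightarrow> 'a) set"
  morphisms coeff Abs_group_ring ..

setup_lifting type_definition_group_ring

instantiation group_ring :: (comm_ring_1, "{finite,ab_group_add}") comm_ring_1
begin

lift_definition zero_group_ring :: "('a, 'b) group_ring" is "\<lambda>_. 0" .
lift_definition one_group_ring :: "('a, 'b) group_ring" is gr_one .
lift_definition plus_group_ring :: "('a, 'b) group_ring \<Rightarrow> ('a, 'b) group_ring \<Rightarrow> ('a, 'b) group_ring"
  is gr_add .
lift_definition uminus_group_ring :: "('a, 'b) group_ring \<Rightarrow> ('a, 'b) group_ring"
  is "\<lambda>u g. - u g" .
lift_definition minus_group_ring :: "('a, 'b) group_ring \<Rightarrow> ('a, 'b) group_ring \<Rightarrow> ('a, 'b) group_ring"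
  is "\<lambda>u v g. u g - v g" .
lift_definition times_group_ring :: "('a, 'b) group_ring \<Rightarrow> ('a, 'b) group_ring \<Rightarrow> ('a, 'b) group_ring"
  is gr_mult .

instance
proof
  fix a b c :: "('a, 'b) group_ring"
  show "a * b * c = a * (b * c)" by transfer (rule gr_mult_assoc)
  show "a * b = b * a" by transfer (rule gr_mult_commute)
  show "1 * a = a" by transfer (simp add: gr_mult_commute[of gr_one] gr_mult_one_right)
  show "(a + b) * c = a * c + b * c" by transfer (rule gr_mult_add_left)
  show "a + b + c = a + (b + c)" by transfer (simp add: gr_add_def add.assoc)
  show "a + b = b + a" by transfer (simp add: gr_add_def add.commute)
  show "0 + a = a" by transfer (simp add: gr_add_def)
  show "- a + a = 0" by transfer (simp add: gr_add_def)
  show "a - b = a + - b" by transfer (simp add: gr_add_def)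
  show "0 \<noteq> (1 :: ('a, 'b) group_ring)" by transfer (metis gr_one_def zero_neq_one)
qed

end

lift_definition gr_const :: "'a \<Rightarrow> ('a::comm_ring_1, 'g::{finite,ab_group_add}) group_ring"
  is "\<lambda>c g. if g = 0 then c else 0" .

lift_definition gr_basis :: "'g \<Rightarrow> ('a::comm_ring_1, 'g::{finite,ab_group_add}) group_ring"
  is "\<lambda>k g. if g = k then 1 else 0" .

lemma gr_mult_const_left:
  fixes u :: "'g::{finite,ab_group_add} \<Rightarrow> 'a::comm_ring_1"
  shows "gr_mult (\<lambda>h. if h = 0 then c else 0) u g = c * u g"
proof -
  have "gr_mult (\<lambda>h. if h = 0 then c else 0) u g = (\<Sum>h::'g\<in>UNIV. if h = 0 then c * u g else 0)"
    unfolding gr_mult_def by (rule sum.cong) auto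
  then show ?thesis by simp
qed

lemma gr_mult_delta_right: "gr_mult u (\<lambda>h. if h = k then 1 else 0) g = u (g - k)"
proof -
  have "gr_mult u (\<lambda>h. if h = k then 1 else 0) g = (\<Sum>h\<in>UNIV. if h = g - k then u h else 0)"
    unfolding gr_mult_def by (rule sum.cong) (auto simp: algebra_simps)
  then show ?thesis by simp
qed

lemma coeff_gr_const_mult: "coeff (gr_const c * x) g = c * coeff x g"
  by transfer (rule gr_mult_const_left)

lemma coeff_mult_gr_basis: "coeff (x * gr_basis k) g = coeff x (g - k)"
  by transfer (rule gr_mult_delta_right)

lemma coeff_sum: "coeff (sum f A) g = (\<Sum>x\<in>A. coeff (f x) g)"
  using sum_comp_morphism[of "\<lambda>x. coeff x g" f A]
  by (simp add: comp_def zero_group_ring.rep_eq plus_group_ring.rep_eq gr_add_def)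

lemma gr_const_mult: "gr_const (a * b) = gr_const a * gr_const b"
  by (rule coeff_inject[THEN iffD1]) (simp add: fun_eq_iff coeff_gr_const_mult gr_const.rep_eq)

lemma gr_const_one: "gr_const 1 = 1"
  by transfer (simp add: gr_one_def)

lemma gr_const_zero: "gr_const 0 = 0"
  by transfer simp

lemma gr_const_power: "gr_const (a ^ n) = gr_const a ^ n"
  by (induction n) (simp_all add: gr_const_one gr_const_mult)

lemma group_ring_expansion: "x = (\<Sum>g\<in>UNIV. gr_const (coeff x g) * gr_basis g)"
proof (rule coeff_inject[THEN iffD1], rule ext)
  fix h
  have "coeff (\<Sum>g\<in>UNIV. gr_const (coeff x g) * gr_basis g) h = (\<Sum>g\<in>UNIV. if g = h then coeff x h else 0)"
    unfolding coeff_sum coeff_gr_const_mult gr_basis.rep_eq by (rule sum.cong) auto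
  then show "coeff x h = coeff (\<Sum>g\<in>UNIV. gr_const (coeff x g) * gr_basis g) h" by simp
qed

definition nilpotent :: "'a::comm_semiring_1 \<Rightarrow> bool" where
  "nilpotent x \<longleftrightarrow> (\<exists>n. x ^ n = 0)"

lemma nilpotent_add:
  fixes a b :: "'a::comm_semiring_1"
  assumes "nilpotent a" "nilpotent b"
  shows "nilpotent (a + b)"
proof -
  obtain m n where a: "a ^ m = 0" and b: "b ^ n = 0"
    using assms unfolding nilpotent_def by blast
  have "of_nat ((m + n) choose k) * a ^ k * b ^ (m + n - k) = 0" if "k \<le> m + n" for k
  proof (cases "m \<le> k")
    case True
    then have "a ^ k = a ^ m * a ^ (k - m)" by (simp flip: power_add)
    then show ?thesis using a by simp
  next
    case False
    then have "m + n - k = n + (m - k)" by simp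
    then have "b ^ (m + n - k) = b ^ n * b ^ (m - k)" by (simp add: power_add)
    then show ?thesis using b by simp
  qed
  then have "(a + b) ^ (m + n) = 0" by (simp add: binomial_ring)
  then show ?thesis unfolding nilpotent_def by blast
qed

lemma nilpotent_zero: "nilpotent 0"
  unfolding nilpotent_def by (metis power_one_right)

lemma nilpotent_sum: "(\<And>x. x \<in> A \<Longrightarrow> nilpotent (f x)) \<Longrightarrow> nilpotent (sum f A)"
  by (induction A rule: infinite_finite_induct) (simp_all add: nilpotent_add nilpotent_zero)

lemma nilpotent_mult: "nilpotent (a :: 'a::comm_semiring_1) \<Longrightarrow> nilpotent (a * b)"
  unfolding nilpotent_def by (metis mult_zero_left power_mult_distrib)

lemma is_unit_one_plus_nilpotent:
  fixes e :: "'a::comm_ring_1"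
  assumes "nilpotent e"
  shows "(1 + e) dvd 1"
proof -
  obtain n where "e ^ n = 0" using assms unfolding nilpotent_def by blast
  then have "1 = (1 - (- e)) * (\<Sum>i<n. (- e) ^ i)"
    by (metis diff_zero one_diff_power_eq power_minus mult_zero_right)
  then show ?thesis by (simp add: dvdI)
qed

lemma nilpotent_group_ring:
  assumes "\<And>g. nilpotent (coeff x g)"
  shows "nilpotent x"
proof -
  have "nilpotent (gr_const (coeff x g))" for g
  proof -
    obtain n where "coeff x g ^ n = 0" using assms[of g] unfolding nilpotent_def by blast
    then have "gr_const (coeff x g) ^ n = 0" by (simp flip: gr_const_power add: gr_const_zero)
    then show ?thesis unfolding nilpotent_def by blast
  qed
  then show ?thesis
    by (subst group_ring_expansion) (intro nilpotent_sum nilpotent_mult)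
qed

lemma ideal_on_UNIV_eq_UNIV_iff:
  assumes "ideal_on UNIV I"
  shows "I = UNIV \<longleftrightarrow> (1 :: 'a::comm_ring_1) \<in> I"
proof
  assume "1 \<in> I"
  then have "r * 1 \<in> I" for r using assms unfolding ideal_on_def by blast
  then show "I = UNIV" by auto
qed simp

lemma ideal_on_principal: "ideal_on UNIV (range ((*) (x :: 'a::comm_ring_1)))"
  unfolding ideal_on_def
proof (intro conjI ballI)
  show "0 \<in> range ((*) x)" by (rule range_eqI[of _ _ 0]) simp
next
  fix u v assume "u \<in> range ((*) x)" "v \<in> range ((*) x)"
  then obtain r s where "u = x * r" "v = x * s" by blast
  then show "u + v \<in> range ((*) x)" by (intro range_eqI[of _ _ "r + s"]) (simp add: distrib_left)
next
  fix t u assume "u \<in> range ((*) x)"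
  then obtain r where "u = x * r" by blast
  then show "t * u \<in> range ((*) x)" by (intro range_eqI[of _ _ "t * r"]) (simp add: mult.left_commute)
qed simp

lemma
  fixes M :: "'a::{comm_ring_1,finite} set"
  defines "M \<equiv> max_ideal_on UNIV"
  assumes "chain_ring_on (UNIV :: 'a set)"
  shows ideal_max_ideal_on: "ideal_on UNIV M"
    and max_ideal_on_neq_UNIV: "M \<noteq> UNIV"
    and subset_max_ideal_on: "\<And>I. ideal_on UNIV I \<Longrightarrow> I \<noteq> UNIV \<Longrightarrow> I \<subseteq> M"
proof -
  let ?proper = "{I :: 'a set. ideal_on UNIV I \<and> I \<noteq> UNIV}"
  have chain: "I \<subseteq> J \<or> J \<subseteq> I" if "ideal_on UNIV I" "ideal_on UNIV J" for I J :: "'a set"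
    using assms(2) that unfolding chain_ring_on_def by blast
  have "(0 :: 'a) \<noteq> 1" using assms(2) unfolding chain_ring_on_def by blast
  then have "{0} \<noteq> (UNIV :: 'a set)" by (metis UNIV_I singletonD)
  then have "{0} \<in> ?proper" unfolding ideal_on_def by simp
  then obtain M0 where M0: "M0 \<in> ?proper"
    and maximal: "\<And>J. J \<in> ?proper \<Longrightarrow> M0 \<subseteq> J \<Longrightarrow> M0 = J"
    using finite_has_maximal[of ?proper] by auto
  have above_M0: "J = M0 \<or> J = UNIV" if "ideal_on UNIV J" "M0 \<subseteq> J" for J
    using maximal[of J] that by blast
  have "M = M0"
    unfolding M_def max_ideal_on_def
  proof (rule the_equality)
    fix M' :: "'a set"
    assume "ideal_on UNIV M' \<and> M' \<noteq> UNIV \<and>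
      (\<forall>J. ideal_on UNIV J \<and> M' \<subseteq> J \<longrightarrow> J = M' \<or> J = UNIV)"
    then show "M' = M0" using chain[of M' M0] M0 above_M0 by blast
  qed (use M0 above_M0 in blast)
  then show "ideal_on UNIV M" "M \<noteq> UNIV" using M0 by auto
  show "I \<subseteq> M" if "ideal_on UNIV I" "I \<noteq> UNIV" for I
    using chain[of I M0] above_M0[of I] that M0 \<open>M = M0\<close> by blast
qed

lemma is_unit_if_notin_max_ideal_on:
  fixes x :: "'a::{comm_ring_1,finite}"
  assumes "chain_ring_on (UNIV :: 'a set)" "x \<notin> max_ideal_on UNIV"
  shows "x dvd 1"
proof -
  have "x \<in> range ((*) x)" by (metis mult_1_right rangeI)
  then have "range ((*) x) = UNIV"
    using subset_max_ideal_on[OF assms(1) ideal_on_principal[of x]] assms(2) by blast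
  then obtain y where "1 = x * y" by (metis UNIV_I imageE)
  then show ?thesis by (rule dvdI)
qed

lemma power_eventually_periodic: "\<exists>i p. 0 < p \<and> (a :: 'a::{monoid_mult,finite}) ^ (i + p) = a ^ i"
proof -
  have "\<not> inj (\<lambda>k::nat. a ^ k)"
    using finite_imageD[of "\<lambda>k::nat. a ^ k" UNIV] by auto
  then obtain i j where "i \<noteq> j" "a ^ i = a ^ j"
    unfolding inj_def by blast
  then show ?thesis
  proof (cases "i < j")
    case True
    with \<open>a ^ i = a ^ j\<close> show ?thesis by (intro exI[of _ i] exI[of _ "j - i"]) simp
  next
    case False
    with \<open>i \<noteq> j\<close> \<open>a ^ i = a ^ j\<close> show ?thesis by (intro exI[of _ j] exI[of _ "i - j"]) simp
  qed
qed

lemma nilpotent_if_in_max_ideal_on: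
  fixes a :: "'a::{comm_ring_1,finite}"
  assumes ch: "chain_ring_on (UNIV :: 'a set)" and a: "a \<in> max_ideal_on UNIV"
  shows "nilpotent a"
proof -
  let ?M = "max_ideal_on (UNIV :: 'a set)"
  have M: "ideal_on UNIV ?M" "1 \<notin> ?M"
    using ideal_max_ideal_on[OF ch] max_ideal_on_neq_UNIV[OF ch] ideal_on_UNIV_eq_UNIV_iff by blast+
  obtain i p where "0 < p" and period: "a ^ (i + p) = a ^ i"
    using power_eventually_periodic by blast
  then have "a ^ p = a ^ (p - 1) * a" by (simp flip: power_Suc2)
  moreover have "a ^ (p - 1) * a \<in> ?M" using M(1) a unfolding ideal_on_def by blast
  ultimately have "a ^ p \<in> ?M" by simp
  have "1 - a ^ p \<notin> ?M"
  proof
    assume "1 - a ^ p \<in> ?M"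
    then have "(1 - a ^ p) + a ^ p \<in> ?M" using \<open>a ^ p \<in> ?M\<close> M(1) unfolding ideal_on_def by blast
    with M(2) show False by simp
  qed
  then obtain y where y: "1 = (1 - a ^ p) * y"
    using is_unit_if_notin_max_ideal_on[OF ch] by (meson dvdE)
  have "a ^ i * (1 - a ^ p) = 0" using period by (simp add: algebra_simps power_add)
  then have "a ^ i = 0" by (metis y mult.assoc mult_1_right mult_zero_left)
  then show ?thesis unfolding nilpotent_def by blast
qed

lemma is_unit_if_pi_unit:
  assumes ch: "chain_ring_on (UNIV :: 'a::{comm_ring_1,finite} set)"
    and "pi_unit (max_ideal_on UNIV) (coeff (x :: ('a, 'g::{finite,ab_group_add}) group_ring))"
  shows "x dvd 1"
proof -
  obtain v where v: "\<And>g. gr_mult (coeff x) v g - gr_one g \<in> max_ideal_on UNIV"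
    using assms(2) unfolding pi_unit_def by blast
  define e where "e = x * Abs_group_ring v - 1"
  have "coeff e g \<in> max_ideal_on UNIV" for g
    using v[of g] by (simp add: e_def minus_group_ring.rep_eq times_group_ring.rep_eq
        one_group_ring.rep_eq Abs_group_ring_inverse)
  then have "(1 + e) dvd 1"
    by (intro is_unit_one_plus_nilpotent nilpotent_group_ring nilpotent_if_in_max_ideal_on[OF ch])
  then show ?thesis unfolding e_def by (simp add: dvd_mult_left)
qed

lemma ring_aut_zero: "ring_aut \<sigma> \<Longrightarrow> \<sigma> 0 = 0"
  unfolding ring_aut_def by (metis add_cancel_right_right add_0)

lemma ring_aut_sum: "ring_aut \<sigma> \<Longrightarrow> \<sigma> (sum f A) = (\<Sum>x\<in>A. \<sigma> (f x))"
  using sum_comp_morphism[of \<sigma> f A] ring_aut_zero unfolding ring_aut_def comp_def by metis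

lemma sigma_hat_gr_mult:
  fixes u v :: "'g::{finite,ab_group_add} \<Rightarrow> 'a::comm_ring_1"
  assumes "ring_aut \<sigma>"
  shows "sigma_hat \<sigma> (gr_mult u v) = gr_mult (sigma_hat \<sigma> u) (sigma_hat \<sigma> v)"
proof
  fix g
  have mult: "\<sigma> (x * y) = \<sigma> x * \<sigma> y" for x y using assms unfolding ring_aut_def by blast
  have "sigma_hat \<sigma> (gr_mult u v) g = (\<Sum>h\<in>UNIV. \<sigma> (u h) * \<sigma> (v (- g - h)))"
    unfolding sigma_hat_def gr_mult_def by (simp add: ring_aut_sum[OF assms] mult)
  also have "\<dots> = (\<Sum>h\<in>UNIV. \<sigma> (u (- h)) * \<sigma> (v (h - g)))"
  proof (rule sum.reindex_bij_witness[of _ uminus uminus])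
    fix h
    have "- h - g = - g - h" by (simp add: algebra_simps)
    then show "\<sigma> (u (- (- h))) * \<sigma> (v (- h - g)) = \<sigma> (u h) * \<sigma> (v (- g - h))"
      by (simp only: minus_minus)
  qed simp_all
  finally show "sigma_hat \<sigma> (gr_mult u v) g = gr_mult (sigma_hat \<sigma> u) (sigma_hat \<sigma> v) g"
    unfolding sigma_hat_def gr_mult_def by simp
qed

lift_definition gr_conj ::
    "('a \<Rightarrow> 'a) \<Rightarrow> ('a::comm_ring_1, 'g::{finite,ab_group_add}) group_ring \<Rightarrow> ('a, 'g) group_ring"
  is sigma_hat .

lemma gr_conj_mult: "ring_aut \<sigma> \<Longrightarrow> gr_conj \<sigma> (x * y) = gr_conj \<sigma> x * gr_conj \<sigma> y"
  by transfer (rule sigma_hat_gr_mult)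

lemma gr_conj_gr_conj: "\<sigma> \<circ> \<sigma> = id \<Longrightarrow> gr_conj \<sigma> (gr_conj \<sigma> x) = x"
  by transfer (simp add: sigma_hat_def pointfree_idE)

lemma herm_coeff:
  "herm \<sigma> (coeff x1, coeff y1) (coeff x2, coeff y2) = coeff (x1 * gr_conj \<sigma> x2 + y1 * gr_conj \<sigma> y2) 0"
  by (simp add: herm_def plus_group_ring.rep_eq times_group_ring.rep_eq gr_conj.rep_eq
      gr_add_def gr_mult_def sigma_hat_def)

lemma herm_orthogonal_graph_eq_zero:
  assumes aut: "ring_aut \<sigma>" and inv: "\<sigma> \<circ> \<sigma> = id"
    and unit: "(1 + d * gr_conj \<sigma> d) dvd 1"
    and orth: "\<And>w. herm \<sigma> (coeff u, coeff (u * d)) (coeff w, coeff (w * d)) = 0"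
  shows "u = 0"
proof -
  let ?x = "1 + d * gr_conj \<sigma> d"
  have expand: "u * ?x * b = u * b + u * d * (b * gr_conj \<sigma> d)" for b
    by (simp add: algebra_simps)
  have "coeff (u * ?x) g = 0" for g
  proof -
    let ?w = "gr_conj \<sigma> (gr_basis (- g))"
    have "coeff (u * ?x) g = coeff (u * ?x * gr_basis (- g)) 0"
      by (simp add: coeff_mult_gr_basis)
    also have "\<dots> = herm \<sigma> (coeff u, coeff (u * d)) (coeff ?w, coeff (?w * d))"
      by (simp only: herm_coeff gr_conj_mult[OF aut] gr_conj_gr_conj[OF inv] expand)
    finally show ?thesis using orth by simp
  qed
  then have "u * ?x = 0"
    by (intro coeff_inject[THEN iffD1] ext) (simp add: zero_group_ring.rep_eq)
  moreover obtain y where "1 = ?x * y" using unit by (rule dvdE)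
  ultimately show "u = 0" by (metis mult.assoc mult_1_right mult_zero_left)
qed

lemma code_C_coeff: "code_C (coeff c) (coeff d) = range (\<lambda>u. (coeff (u * c), coeff (u * d)))"
proof (intro equalityI subsetI)
  fix x assume "x \<in> code_C (coeff c) (coeff d)"
  then obtain u where "x = (gr_mult u (coeff c), gr_mult u (coeff d))" unfolding code_C_def by blast
  then show "x \<in> range (\<lambda>u. (coeff (u * c), coeff (u * d)))"
    by (intro range_eqI[of _ _ "Abs_group_ring u"]) (simp add: times_group_ring.rep_eq Abs_group_ring_inverse)
next
  fix x assume "x \<in> range (\<lambda>u. (coeff (u * c), coeff (u * d)))"
  then show "x \<in> code_C (coeff c) (coeff d)" unfolding code_C_def times_group_ring.rep_eq by blast
qed

lemma code_C_one: "code_C gr_one (coeff d) = range (\<lambda>u. (coeff u, coeff (u * d)))"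
  using code_C_coeff[of 1 d] by (simp add: one_group_ring.rep_eq)

lemma qa2_code_code_C: "qa2_code (code_C (coeff c) (coeff d))"
proof -
  let ?C = "range (\<lambda>u. (coeff (u * c), coeff (u * d)))"
  have "qa2_code ?C"
    unfolding qa2_code_def
  proof (intro conjI ballI allI)
    show "((\<lambda>_. 0), (\<lambda>_. 0)) \<in> ?C"
      by (rule range_eqI[of _ _ 0]) (simp add: zero_group_ring.rep_eq)
  next
    fix x y assume "x \<in> ?C" "y \<in> ?C"
    then obtain u v where "x = (coeff (u * c), coeff (u * d))" "y = (coeff (v * c), coeff (v * d))"
      by blast
    moreover have "gr_add (coeff (u * e)) (coeff (v * e)) = coeff ((u + v) * e)" for e
      by (simp add: distrib_right plus_group_ring.rep_eq)
    ultimately show "(gr_add (fst x) (fst y), gr_add (snd x) (snd y)) \<in> ?C"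
      by (intro range_eqI[of _ _ "u + v"]) simp
  next
    fix w x assume "x \<in> ?C"
    then obtain u where "x = (coeff (u * c), coeff (u * d))" by blast
    moreover have "gr_mult w (coeff (u * e)) = coeff (Abs_group_ring w * u * e)" for e
      by (simp add: times_group_ring.rep_eq Abs_group_ring_inverse mult.assoc)
    ultimately show "(gr_mult w (fst x), gr_mult w (snd x)) \<in> ?C"
      by (intro range_eqI[of _ _ "Abs_group_ring w * u"]) simp
  qed
  then show ?thesis by (simp only: code_C_coeff)
qed

lemma herm_LCD_code_C_one:
  fixes d :: "('a::comm_ring_1, 'g::{finite,ab_group_add}) group_ring"
  assumes "ring_aut \<sigma>" "\<sigma> \<circ> \<sigma> = id" "(1 + d * gr_conj \<sigma> d) dvd 1"
  shows "herm_LCD \<sigma> (code_C gr_one (coeff d))" (is "herm_LCD \<sigma> ?C")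
  unfolding herm_LCD_def
proof
  show "qa2_code ?C"
    using qa2_code_code_C[of 1 d] by (simp add: one_group_ring.rep_eq)
  have zero: "((\<lambda>_. 0), (\<lambda>_. 0)) = (coeff 0, coeff (0 * d))"
    by (simp add: zero_group_ring.rep_eq)
  show "?C \<inter> herm_dual \<sigma> ?C = {((\<lambda>_. 0), (\<lambda>_. 0))}"
  proof (intro equalityI subsetI)
    fix x :: "('a, 'g) qa2" assume "x \<in> ?C \<inter> herm_dual \<sigma> ?C"
    then obtain u where x: "x = (coeff u, coeff (u * d))"
      and "\<And>w. herm \<sigma> (coeff u, coeff (u * d)) (coeff w, coeff (w * d)) = 0"
      unfolding code_C_one herm_dual_def by blast
    then have "u = 0" using herm_orthogonal_graph_eq_zero assms by blast
    then show "x \<in> {((\<lambda>_. 0), (\<lambda>_. 0))}" using x by (simp add: zero_group_ring.rep_eq)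
  next
    fix x :: "('a, 'g) qa2" assume "x \<in> {((\<lambda>_. 0), (\<lambda>_. 0))}"
    then have x: "x = (coeff 0, coeff (0 * d))" by (simp add: zero)
    have "herm \<sigma> (coeff 0, coeff (0 * d)) (coeff w, coeff (w * d)) = 0" for w
      unfolding herm_coeff by (simp add: zero_group_ring.rep_eq)
    then show "x \<in> ?C \<inter> herm_dual \<sigma> ?C"
      unfolding code_C_one herm_dual_def x by blast
  qed
qed

lemma coeff_sum_gr_basis_enum:
  fixes h :: "nat \<Rightarrow> 'g::{finite,ab_group_add}"
  assumes "bij_betw h {..<n} UNIV" "j < n"
  shows "coeff (\<Sum>i<n. gr_const (l i) * gr_basis (h i)) (h j) = l j"
proof -
  have "coeff (\<Sum>i<n. gr_const (l i) * gr_basis (h i)) (h j) = (\<Sum>i<n. if i = j then l j else 0)"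
    unfolding coeff_sum coeff_gr_const_mult gr_basis.rep_eq
    using assms by (intro sum.cong) (auto simp: bij_betw_def inj_on_def)
  then show ?thesis using assms(2) by simp
qed

lemma sum_gr_basis_enum_coeff:
  fixes h :: "nat \<Rightarrow> 'g::{finite,ab_group_add}"
  assumes "bij_betw h {..<n} UNIV"
  shows "(\<Sum>i<n. gr_const (coeff x (h i)) * gr_basis (h i)) = x"
  using sum.reindex_bij_betw[OF assms, of "\<lambda>g. gr_const (coeff x g) * gr_basis g"]
  by (simp flip: group_ring_expansion)

lemma free_S_rank_code_C_one:
  fixes d :: "('a::comm_ring_1, 'g::{finite,ab_group_add}) group_ring"
  shows "free_S_rank (code_C gr_one (coeff d)) (card (UNIV :: 'g set))"
proof -
  let ?n = "card (UNIV :: 'g set)"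
  obtain h where h: "bij_betw h {..<?n} (UNIV :: 'g set)"
    using ex_bij_betw_nat_finite[of "UNIV :: 'g set"] by (auto simp: atLeast0LessThan)
  define b where "b i = (coeff (gr_basis (h i) :: ('a, 'g) group_ring), coeff (gr_basis (h i) * d))" for i
  define comb where "comb l = (\<Sum>i<?n. gr_const (l i) * gr_basis (h i))" for l :: "nat \<Rightarrow> 'a"
  have comb_eq: "((\<lambda>g. \<Sum>i<?n. l i * fst (b i) g), (\<lambda>g. \<Sum>i<?n. l i * snd (b i) g))
      = (coeff (comb l), coeff (comb l * d))" for l
    by (simp add: b_def comb_def coeff_sum sum_distrib_right coeff_gr_const_mult mult.assoc fun_eq_iff)
  show ?thesis
    unfolding free_S_rank_def
  proof (intro exI[of _ b] conjI allI impI ballI)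
    show "b i \<in> code_C gr_one (coeff d)" for i
      unfolding b_def code_C_one by blast
  next
    fix c assume "c \<in> code_C gr_one (coeff d)"
    then obtain u where c: "c = (coeff u, coeff (u * d))" unfolding code_C_one by blast
    let ?l = "\<lambda>i. if i < ?n then coeff u (h i) else 0"
    have "comb ?l = (\<Sum>i<?n. gr_const (coeff u (h i)) * gr_basis (h i))"
      unfolding comb_def by (rule sum.cong) auto
    then have comb_l: "comb ?l = u" by (simp add: sum_gr_basis_enum_coeff[OF h])
    show "\<exists>!l. (\<forall>i\<ge>?n. l i = 0) \<and>
        c = ((\<lambda>g. \<Sum>i<?n. l i * fst (b i) g), (\<lambda>g. \<Sum>i<?n. l i * snd (b i) g))"
      unfolding comb_eq
    proof (intro ex1I[of _ ?l])
      fix l assume "(\<forall>i\<ge>?n. l i = 0) \<and> c = (coeff (comb l), coeff (comb l * d))"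
      then have "\<forall>i\<ge>?n. l i = 0" "coeff u = coeff (comb l)" unfolding c by simp_all
      then show "l = ?l" by (auto simp: comb_def coeff_sum_gr_basis_enum[OF h])
    qed (simp add: c comb_l)
  qed
qed

theorem mainTheorem15:
  fixes R :: "'a::{comm_ring_1,finite} set"
    and \<sigma> :: "'a \<Rightarrow> 'a"
    and q :: nat
    and d :: "'g::{finite,ab_group_add} \<Rightarrow> 'a"
  assumes "chain_ring_on (UNIV :: 'a set)"
    and "chain_ring_on R"
    and "galois_ext_deg2 R \<sigma>"
    and "prime_power q"
    and "residue_card (UNIV :: 'a set) = q ^ 2"
    and "residue_card R = q"
    and "odd (card (UNIV :: 'g set))"
    and "coprime (card (UNIV :: 'g set)) q"
    and "pi_unit (max_ideal_on (UNIV :: 'a set)) (gr_add gr_one (gr_mult d (sigma_hat \<sigma> d)))"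
  shows "herm_LCD \<sigma> (code_C gr_one d) \<and> free_S_rank (code_C gr_one d) (card (UNIV :: 'g set))"
proof -
  have aut: "ring_aut \<sigma>" and inv: "\<sigma> \<circ> \<sigma> = id"
    using assms(3) unfolding galois_ext_deg2_def by blast+
  define D :: "('a, 'g) group_ring" where "D = Abs_group_ring d"
  have d: "d = coeff D" unfolding D_def by (simp add: Abs_group_ring_inverse)
  have "gr_add gr_one (gr_mult d (sigma_hat \<sigma> d)) = coeff (1 + D * gr_conj \<sigma> D)"
    unfolding d
    by (simp add: plus_group_ring.rep_eq times_group_ring.rep_eq one_group_ring.rep_eq gr_conj.rep_eq)
  with assms(9) have "(1 + D * gr_conj \<sigma> D) dvd 1"
    using is_unit_if_pi_unit[OF assms(1)] by simp
  then show ?thesis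
    unfolding d using herm_LCD_code_C_one[OF aut inv] free_S_rank_code_C_one by blast
qed

end
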